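(* Let $f,h:\mathbb{R}^d\to\mathbb{R}$ be closed convex, $a,b,\eta>0$, $\delta=\sqrt{2\eta/(d+2)}$, $\widetilde Q=\{(x,s,t):h(x)\le as,\ f(x)+as\le bt\}$. Let $(y,u,v)\in\mathbb{R}^{d+2}$, $q=(y,u,v-b\eta)$, $p_{k-1}\in\widetilde Q$, $r_{\mathrm{loc}}=\|p_{k-1}-q\|$, $\widetilde Q_{\mathrm{loc}}=\widetilde Q\cap\{p:\|p-q\|\le2r_{\mathrm{loc}}\}$, and $\widetilde\Theta(p)=I_{\widetilde Q}(p)+\frac1{2\eta}\|p-q\|^2+bv-\frac{\eta b^2}2$. Let $\tilde p\in\widetilde Q_{\mathrm{loc}}$ satisfy $\widetilde\Theta(\tilde p)-\min_{\widetilde Q_{\mathrm{loc}}}\widetilde\Theta\le\frac1{d+2}$, and define $$\widetilde{\mathcal P}_1(p)=\frac{\|p-\tilde p\|^2+\|\tilde p-q\|^2}{2\eta}-\frac\delta\eta(\|p-\tilde p\|+\|\tilde p-q\|)+bv-\frac{b^2\eta}2-\frac{\delta^2}\eta.$$ Then $\widetilde{\mathcal P}_1(p)\le\widetilde\Theta(p)$ for all $p\in\mathbb{R}^{d+2}$.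
   Context: $I_{\widetilde Q}$ is $0$ on $\widetilde Q$ and $+\infty$ off it. *)

theory Defs
  imports "HOL-Analysis.Analysis"
begin

definition closed_fun :: "('a::topological_space \<Rightarrow> real) \<Rightarrow> bool" where
  "closed_fun f \<longleftrightarrow> closed {(x, y). f x \<le> y}"

definition ind_fun :: "'a set \<Rightarrow> 'a \<Rightarrow> ereal" where
  "ind_fun S p = (if p \<in> S then 0 else \<infinity>)"

definition Qtil :: "('a \<Rightarrow> real) \<Rightarrow> ('a \<Rightarrow> real) \<Rightarrow> real \<Rightarrow> real \<Rightarrow> ('a \<times> real \<times> real) set" where
  "Qtil f h a b = {(x, s, t). h x \<le> a * s \<and> f x + a * s \<le> b * t}"

end

theory Submission
  imports Defs
begin

text \<open>
  The gap hypothesis says that \<open>p\<^sub>t\<^sub>i\<^sub>l\<close> minimises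
  \<open>\<parallel>\<cdot> - q\<parallel>\<^sup>2\<close> up to \<open>\<delta>\<^sup>2\<close> over \<open>Q\<^sub>l\<^sub>o\<^sub>c\<close>, which contains every point of the convex set \<open>Q\<close>
  at least as close to \<open>q\<close> as \<open>p\<^sub>t\<^sub>i\<^sub>l\<close>. Steps from \<open>p\<^sub>t\<^sub>i\<^sub>l\<close> towards any \<open>p \<in> Q\<close> that
  decrease the distance to \<open>q\<close> therefore stay in \<open>Q\<^sub>l\<^sub>o\<^sub>c\<close>, so an exact line search along the segment
  yields the approximate variational inequality
  \<open>\<langle>p\<^sub>t\<^sub>i\<^sub>l - q, p - p\<^sub>t\<^sub>i\<^sub>l\<rangle> \<ge> -\<delta>\<parallel>p - p\<^sub>t\<^sub>i\<^sub>l\<parallel> - \<delta>\<^sup>2\<close>. Expanding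
  \<open>\<parallel>p - q\<parallel>\<^sup>2 = \<parallel>p - p\<^sub>t\<^sub>i\<^sub>l\<parallel>\<^sup>2 + \<parallel>p\<^sub>t\<^sub>i\<^sub>l - q\<parallel>\<^sup>2 + 2\<langle>p\<^sub>t\<^sub>i\<^sub>l - q, p - p\<^sub>t\<^sub>i\<^sub>l\<rangle>\<close> gives the claim on \<open>Q\<close>; off \<open>Q\<close>
  the right-hand side is \<open>\<infinity>\<close>.
\<close>

lemma convex_Qtil:
  fixes f h :: "'a::real_vector \<Rightarrow> real"
  assumes cf: "convex_on UNIV f" and ch: "convex_on UNIV h"
  shows "convex (Qtil f h a b)"
proof (rule convexI)
  fix p p' :: "'a \<times> real \<times> real" and m n :: real
  assume pQ: "p \<in> Qtil f h a b" and pQ': "p' \<in> Qtil f h a b" and mn: "0 \<le> m" "0 \<le> n" "m + n = 1"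
  obtain x s t where p: "p = (x, s, t)" by (cases p) auto
  obtain x' s' t' where p': "p' = (x', s', t')" by (cases p') auto
  have in_Q: "h x \<le> a * s" "f x + a * s \<le> b * t" "h x' \<le> a * s'" "f x' + a * s' \<le> b * t'"
    using pQ pQ' by (auto simp: p p' Qtil_def)
  have m: "m = 1 - n" using mn by simp
  have hc: "h (m *\<^sub>R x + n *\<^sub>R x') \<le> m * h x + n * h x'"
    using convex_onD[OF ch, of n x x'] mn unfolding m by simp
  have fc: "f (m *\<^sub>R x + n *\<^sub>R x') \<le> m * f x + n * f x'"
    using convex_onD[OF cf, of n x x'] mn unfolding m by simp
  have "m * h x + n * h x' \<le> m * (a * s) + n * (a * s')"
    using mn in_Q by (intro add_mono mult_left_mono) auto
  moreover have "m * (f x + a * s) + n * (f x' + a * s') \<le> m * (b * t) + n * (b * t')"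
    using mn in_Q by (intro add_mono mult_left_mono) auto
  ultimately show "m *\<^sub>R p + n *\<^sub>R p' \<in> Qtil f h a b"
    using hc fc by (simp add: p p' Qtil_def algebra_simps)
qed

text \<open>\<open>2tg + t\<^sup>2A\<^sup>2\<close> is the change of the squared distance after a step \<open>t\<close> along a segment of
  length \<open>A\<close> with initial slope \<open>g\<close>; the steps considered are those not past the minimiser.\<close>

lemma line_search_lower_bound:
  fixes A g \<delta> :: real
  assumes "\<delta> \<ge> 0"
    and step: "\<And>t. 0 \<le> t \<Longrightarrow> t \<le> 1 \<Longrightarrow> t * A\<^sup>2 \<le> - g \<Longrightarrow> - \<delta>\<^sup>2 \<le> 2 * t * g + t\<^sup>2 * A\<^sup>2"
  shows "- \<delta> * \<bar>A\<bar> - \<delta>\<^sup>2 \<le> g"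
proof -
  have nonneg: "0 \<le> \<delta> * \<bar>A\<bar>" "0 \<le> \<delta>\<^sup>2" using assms(1) by simp_all
  consider "0 \<le> g" | "g < 0" "A\<^sup>2 \<le> - g" | "g < 0" "- g < A\<^sup>2" by linarith
  then show ?thesis
  proof cases
    case 1
    then show ?thesis using nonneg by linarith
  next
    case 2
    with step[of 1] show ?thesis using nonneg by simp
  next
    case 3
    then have A2: "A\<^sup>2 > 0" by linarith
    have "- \<delta>\<^sup>2 \<le> 2 * (- g / A\<^sup>2) * g + (- g / A\<^sup>2)\<^sup>2 * A\<^sup>2"
      using 3 A2 by (intro step) (auto simp: field_simps)
    also have "\<dots> = - (g\<^sup>2 / A\<^sup>2)"
      using A2 by (simp add: field_simps power2_eq_square)
    finally have "g\<^sup>2 \<le> (\<delta> * \<bar>A\<bar>)\<^sup>2"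
      using A2 by (simp add: field_simps power_mult_distrib)
    then have "\<bar>g\<bar> \<le> \<bar>\<delta> * \<bar>A\<bar>\<bar>" by (simp only: abs_le_square_iff)
    then have "\<bar>g\<bar> \<le> \<delta> * \<bar>A\<bar>" using assms(1) by (simp add: abs_mult)
    then show ?thesis using nonneg by linarith
  qed
qed

lemma approx_projection_inner_ge:
  fixes pt p q :: "'a::real_inner" and Q :: "'a set"
  assumes "convex Q" "pt \<in> Q" "p \<in> Q" "\<delta> \<ge> 0"
    and approx_min: "\<And>z. z \<in> Q \<Longrightarrow> norm (z - q) \<le> norm (pt - q) \<Longrightarrow>
                       norm (pt - q)^2 - \<delta>\<^sup>2 \<le> norm (z - q)^2"
  shows "- \<delta> * norm (p - pt) - \<delta>\<^sup>2 \<le> inner (pt - q) (p - pt)"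
proof -
  define A where "A = norm (p - pt)"
  define g where "g = inner (pt - q) (p - pt)"
  have "- \<delta>\<^sup>2 \<le> 2 * t * g + t\<^sup>2 * A\<^sup>2"
    if t: "0 \<le> t" "t \<le> 1" "t * A\<^sup>2 \<le> - g" for t
  proof -
    define z where "z = (1 - t) *\<^sub>R pt + t *\<^sub>R p"
    have "z \<in> Q" unfolding z_def using assms(1-3) t by (simp add: convex_alt)
    have z_q: "z - q = (pt - q) + t *\<^sub>R (p - pt)" by (simp add: z_def algebra_simps)
    have dist_z: "norm (z - q)^2 = norm (pt - q)^2 + (2 * t * g + t\<^sup>2 * A\<^sup>2)"
      unfolding z_q power2_norm_eq_inner A_def g_def
      by (simp add: inner_add_left inner_add_right inner_commute power2_eq_square algebra_simps)
    have "2 * t * g + t\<^sup>2 * A\<^sup>2 = t * (g + (g + t * A\<^sup>2))" by (simp add: algebra_simps power2_eq_square)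
    also have "\<dots> \<le> 0"
    proof -
      have "0 \<le> t * A\<^sup>2" using t(1) by simp
      then show ?thesis using t by (intro mult_nonneg_nonpos) linarith+
    qed
    finally have "norm (z - q)^2 \<le> norm (pt - q)^2" using dist_z by linarith
    then have "norm (z - q) \<le> norm (pt - q)" by (rule power2_le_imp_le) simp
    from approx_min[OF \<open>z \<in> Q\<close> this] show ?thesis using dist_z by simp
  qed
  from line_search_lower_bound[OF \<open>\<delta> \<ge> 0\<close> this] show ?thesis by (simp add: A_def g_def)
qed

lemma norm_diff_sq_ge_of_inner_ge:
  fixes pt p q :: "'a::real_inner"
  assumes "\<delta> \<ge> 0" "- \<delta> * norm (p - pt) - \<delta>\<^sup>2 \<le> inner (pt - q) (p - pt)"
  shows "norm (p - pt)^2 + norm (pt - q)^2 - 2 * \<delta> * (norm (p - pt) + norm (pt - q)) - 2 * \<delta>\<^sup>2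
           \<le> norm (p - q)^2"
proof -
  have "norm (p - q)^2 = norm (p - pt)^2 + norm (pt - q)^2 + 2 * inner (pt - q) (p - pt)"
    using dot_norm[of "p - pt" "pt - q"] by (simp add: inner_commute)
  moreover have "0 \<le> \<delta> * norm (pt - q)" using assms(1) by simp
  ultimately show ?thesis using assms(2) by (simp add: algebra_simps)
qed

lemma approx_prox_lower_bound:
  fixes pt p q :: "'a::real_inner" and Q :: "'a set"
  assumes "convex Q" "pt \<in> Q" "p \<in> Q" "\<delta> \<ge> 0" "\<eta> > 0"
    and approx_min: "\<And>z. z \<in> Q \<Longrightarrow> norm (z - q) \<le> norm (pt - q) \<Longrightarrow>
                       norm (pt - q)^2 / (2 * \<eta>) - norm (z - q)^2 / (2 * \<eta>) \<le> \<delta>\<^sup>2 / (2 * \<eta>)"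
  shows "(norm (p - pt)^2 + norm (pt - q)^2) / (2 * \<eta>)
           - \<delta> / \<eta> * (norm (p - pt) + norm (pt - q)) - \<delta>\<^sup>2 / \<eta>
         \<le> norm (p - q)^2 / (2 * \<eta>)"
proof -
  have "norm (pt - q)^2 - \<delta>\<^sup>2 \<le> norm (z - q)^2"
    if "z \<in> Q" "norm (z - q) \<le> norm (pt - q)" for z
    using approx_min[OF that] \<open>\<eta> > 0\<close>
    unfolding diff_divide_distrib[symmetric] by (simp add: divide_le_cancel)
  with assms(1-4) have "- \<delta> * norm (p - pt) - \<delta>\<^sup>2 \<le> inner (pt - q) (p - pt)"
    by (rule approx_projection_inner_ge)
  with \<open>\<delta> \<ge> 0\<close> have norm_ge: "norm (p - pt)^2 + norm (pt - q)^2
      - 2 * \<delta> * (norm (p - pt) + norm (pt - q)) - 2 * \<delta>\<^sup>2 \<le> norm (p - q)^2"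
    by (rule norm_diff_sq_ge_of_inner_ge)
  have "(norm (p - pt)^2 + norm (pt - q)^2) / (2 * \<eta>)
          - \<delta> / \<eta> * (norm (p - pt) + norm (pt - q)) - \<delta>\<^sup>2 / \<eta>
        = (norm (p - pt)^2 + norm (pt - q)^2
            - 2 * \<delta> * (norm (p - pt) + norm (pt - q)) - 2 * \<delta>\<^sup>2) / (2 * \<eta>)"
    using \<open>\<eta> > 0\<close> by (simp add: field_simps)
  also have "\<dots> \<le> norm (p - q)^2 / (2 * \<eta>)"
    using norm_ge \<open>\<eta> > 0\<close> by (intro divide_right_mono) auto
  finally show ?thesis .
qed

lemma ind_fun_gap_le:
  fixes \<phi> :: "'a \<Rightarrow> real"
  assumes "x \<in> S" "z \<in> S" "S \<subseteq> T"
    and gap: "(ind_fun T x + ereal (\<phi> x)) - (INF p \<in> S. ind_fun T p + ereal (\<phi> p)) \<le> ereal \<epsilon>"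
  shows "\<phi> x - \<phi> z \<le> \<epsilon>"
proof -
  have "x \<in> T" "z \<in> T" using assms(1-3) by auto
  then have "ereal (\<phi> x - \<phi> z) = (ind_fun T x + ereal (\<phi> x)) - (ind_fun T z + ereal (\<phi> z))"
    by (simp add: ind_fun_def)
  also have "\<dots> \<le> (ind_fun T x + ereal (\<phi> x)) - (INF p \<in> S. ind_fun T p + ereal (\<phi> p))"
    using assms(2) by (intro ereal_minus_mono INF_lower) auto
  also have "\<dots> \<le> ereal \<epsilon>" by (fact gap)
  finally show ?thesis by simp
qed

theorem lemma23:
  fixes f h :: "real ^ 'd \<Rightarrow> real"
    and a b \<eta> :: real
    and y :: "real ^ 'd" and u v :: real
    and pk ptil :: "(real ^ 'd) \<times> real \<times> real"
  assumes "convex_on UNIV f" "closed_fun f"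
    and "convex_on UNIV h" "closed_fun h"
    and "a > 0" "b > 0" "\<eta> > 0"
    and "pk \<in> Qtil f h a b"
    and "ptil \<in> Qtil f h a b \<inter> {p. norm (p - (y, u, v - b * \<eta>)) \<le> 2 * norm (pk - (y, u, v - b * \<eta>))}"
    and "(\<lambda>p. ind_fun (Qtil f h a b) p + ereal (norm (p - (y, u, v - b * \<eta>))^2 / (2 * \<eta>) + b * v - \<eta> * b^2 / 2)) ptil
         - (INF p \<in> Qtil f h a b \<inter> {p. norm (p - (y, u, v - b * \<eta>)) \<le> 2 * norm (pk - (y, u, v - b * \<eta>))}.
              ind_fun (Qtil f h a b) p + ereal (norm (p - (y, u, v - b * \<eta>))^2 / (2 * \<eta>) + b * v - \<eta> * b^2 / 2))
         \<le> ereal (1 / (real CARD('d) + 2))"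
  shows "\<forall>p :: (real ^ 'd) \<times> real \<times> real.
           ereal ((norm (p - ptil)^2 + norm (ptil - (y, u, v - b * \<eta>))^2) / (2 * \<eta>)
                  - sqrt (2 * \<eta> / (real CARD('d) + 2)) / \<eta> * (norm (p - ptil) + norm (ptil - (y, u, v - b * \<eta>)))
                  + b * v - b^2 * \<eta> / 2 - (sqrt (2 * \<eta> / (real CARD('d) + 2)))^2 / \<eta>)
           \<le> ind_fun (Qtil f h a b) p + ereal (norm (p - (y, u, v - b * \<eta>))^2 / (2 * \<eta>) + b * v - \<eta> * b^2 / 2)"
proof (intro allI, goal_cases)
  case (1 p)
  define q where "q = (y, u, v - b * \<eta>)"
  define \<delta> where "\<delta> = sqrt (2 * \<eta> / (real CARD('d) + 2))"
  have "\<delta> \<ge> 0" and \<delta>_sq: "\<delta>\<^sup>2 / (2 * \<eta>) = 1 / (real CARD('d) + 2)"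
    using \<open>\<eta> > 0\<close> by (simp_all add: \<delta>_def)
  have approx_min: "norm (ptil - q)^2 / (2 * \<eta>) - norm (z - q)^2 / (2 * \<eta>) \<le> \<delta>\<^sup>2 / (2 * \<eta>)"
    if "z \<in> Qtil f h a b" "norm (z - q) \<le> norm (ptil - q)" for z
  proof -
    let ?K = "Qtil f h a b \<inter> {p. norm (p - q) \<le> 2 * norm (pk - q)}"
    have "z \<in> ?K" using that assms(9) by (auto simp: q_def)
    then have "norm (ptil - q)^2 / (2 * \<eta>) + b * v - \<eta> * b\<^sup>2 / 2
                 - (norm (z - q)^2 / (2 * \<eta>) + b * v - \<eta> * b\<^sup>2 / 2) \<le> 1 / (real CARD('d) + 2)"
      using assms(9,10) by (intro ind_fun_gap_le[of ptil ?K]) (auto simp: q_def add.assoc)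
    then show ?thesis unfolding \<delta>_sq by simp
  qed
  show ?case
  proof (cases "p \<in> Qtil f h a b")
    case True
    have "(norm (p - ptil)^2 + norm (ptil - q)^2) / (2 * \<eta>)
            - \<delta> / \<eta> * (norm (p - ptil) + norm (ptil - q)) - \<delta>\<^sup>2 / \<eta>
          \<le> norm (p - q)^2 / (2 * \<eta>)"
      using convex_Qtil[OF assms(1,3)] assms(9) True \<open>\<delta> \<ge> 0\<close> \<open>\<eta> > 0\<close> approx_min
      by (intro approx_prox_lower_bound) auto
    then show ?thesis
      using True unfolding \<delta>_def[symmetric] q_def[symmetric] by (simp add: ind_fun_def mult.commute[of \<eta>])
  qed (simp add: ind_fun_def)
qed

end
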